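(* Let $0<a\le1$. For $x>0$ let $H(a,x):=\dfrac{e^{(1-a)x}}{e^x-1}-\dfrac1x$, and for $x,y>0$ let $$\mathcal{H}(a;x,y):=\frac{H(a,x+y)}{e^y-1}+\frac{H(1,y)}{x+y}.$$ Then $\mathcal{H}(a;x,y)<0$ for all $x,y>0$ if and only if $a\ge1/2$. *)

theory Defs
  imports Complex_Main
begin

definition H :: "real \<Rightarrow> real \<Rightarrow> real" where
  "H a x = exp ((1 - a) * x) / (exp x - 1) - 1 / x"

definition calH :: "real \<Rightarrow> real \<Rightarrow> real \<Rightarrow> real" where
  "calH a x y = H a (x + y) / (exp y - 1) + H 1 y / (x + y)"

end

theory Submission
  imports Defs
begin

text \<open>
  Clearing denominators, \<open>calH a x y < 0\<close> says
  \<open>y (x + y) exp ((1 - a) (x + y)) < (exp (x + y) - 1) (exp y - 1)\<close>.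
  Since \<open>(exp y - 1) / y > 1\<close> tends to \<open>1\<close> as \<open>y \<rightarrow> 0\<close>, this holds for all \<open>x, y > 0\<close>
  iff \<open>s exp ((1 - a) s) \<le> exp s - 1\<close> for all \<open>s > 0\<close>, i.e.\ iff
  \<open>s \<le> exp (a s) - exp ((a - 1) s)\<close>. For \<open>a \<ge> 1/2\<close> the right-hand side is at least
  \<open>2 sinh (s/2) \<ge> s\<close>. For \<open>a < 1/2\<close> the difference \<open>\<phi> s = exp (a s) - exp ((a - 1) s) - s\<close>
  has \<open>\<phi> 0 = \<phi>' 0 = 0\<close> and \<open>\<phi>'' 0 = 2a - 1 < 0\<close>, so it is negative for small \<open>s > 0\<close>.
\<close>

lemma calH_neg_iff:
  assumes "0 < x" "0 < y"
  shows "calH a x y < 0 \<longleftrightarrow>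
         y * (x + y) * exp ((1 - a) * (x + y)) < (exp (x + y) - 1) * (exp y - 1)"
proof -
  have pos: "0 < exp (x + y) - 1" "0 < exp y - 1" "0 < y * (x + y)"
    using assms by auto
  have "calH a x y = exp ((1 - a) * (x + y)) / ((exp (x + y) - 1) * (exp y - 1)) - 1 / (y * (x + y))"
    using pos unfolding calH_def H_def by (simp add: diff_divide_distrib add_divide_distrib)
  then have "calH a x y < 0 \<longleftrightarrow>
      exp ((1 - a) * (x + y)) / ((exp (x + y) - 1) * (exp y - 1)) < 1 / (y * (x + y))"
    by simp
  also have "\<dots> \<longleftrightarrow> y * (x + y) * exp ((1 - a) * (x + y)) < (exp (x + y) - 1) * (exp y - 1)"
    using pos by (simp add: divide_simps) (simp add: mult_ac)
  finally show ?thesis .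
qed

lemma exp_minus_one_eq:
  fixes a s :: real
  shows "exp s - 1 = exp ((1 - a) * s) * (exp (a * s) - exp ((a - 1) * s))"
proof -
  have "exp ((1 - a) * s) * (exp (a * s) - exp ((a - 1) * s)) = exp s - 1"
    by (simp only: right_diff_distrib flip: exp_add) (simp add: algebra_simps)
  then show ?thesis ..
qed

lemma le_exp_diff_of_half_le:
  fixes a s :: real
  assumes "1/2 \<le> a" "0 \<le> s"
  shows "s \<le> exp (a * s) - exp ((a - 1) * s)"
proof -
  have "s \<le> exp (s/2) - exp (- (s/2))"
    using real_le_x_sinh[of "s/2"] assms by (simp add: exp_minus)
  also have "\<dots> \<le> exp ((a - 1/2) * s) * (exp (s/2) - exp (- (s/2)))"
    using mult_right_mono[of 1 "exp ((a - 1/2) * s)" "exp (s/2) - exp (- (s/2))"] assms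
    by simp
  also have "\<dots> = exp (a * s) - exp ((a - 1) * s)"
    by (simp add: right_diff_distrib flip: exp_add) (simp add: algebra_simps)
  finally show ?thesis .
qed

lemma exp_diff_less_of_less_half:
  fixes a :: real
  assumes "0 < a" "a < 1/2"
  shows "\<exists>s>0. exp (a * s) - exp ((a - 1) * s) < s"
proof -
  define \<delta> where "\<delta> = ln (((1 - a) / a)\<^sup>2)"
  have "1 < ((1 - a) / a)\<^sup>2"
    using assms by (simp add: one_less_power)
  then have "0 < \<delta>" and exp_\<delta>: "exp \<delta> = ((1 - a) / a)\<^sup>2"
    using assms by (simp_all add: \<delta>_def ln_gt_zero)
  define \<phi> where "\<phi> t = exp (a * t) - exp ((a - 1) * t) - t" for t
  define \<phi>' where "\<phi>' t = a * exp (a * t) - (a - 1) * exp ((a - 1) * t) - 1" for t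
  define \<phi>'' where "\<phi>'' t = a\<^sup>2 * exp (a * t) - (a - 1)\<^sup>2 * exp ((a - 1) * t)" for t
  have d1: "DERIV \<phi> t :> \<phi>' t" for t
    unfolding \<phi>_def \<phi>'_def by (auto intro!: derivative_eq_intros simp: algebra_simps)
  have d2: "DERIV \<phi>' t :> \<phi>'' t" for t
    unfolding \<phi>'_def \<phi>''_def by (auto intro!: derivative_eq_intros simp: algebra_simps power2_eq_square)
  have \<phi>''_neg: "\<phi>'' t < 0" if "t < \<delta>" for t
  proof -
    \<comment> \<open>\<open>\<phi>'' t < 0\<close> amounts to \<open>exp t < ((1 - a) / a)\<^sup>2 = exp \<delta>\<close>\<close>
    have "a\<^sup>2 * exp t < a\<^sup>2 * exp \<delta>"
      using that assms by simp
    also have "a\<^sup>2 * exp \<delta> = (a - 1)\<^sup>2"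
      using assms by (simp add: exp_\<delta> power_divide power2_commute)
    finally have "a\<^sup>2 * exp t * exp ((a - 1) * t) < (a - 1)\<^sup>2 * exp ((a - 1) * t)"
      by simp
    moreover have "exp t * exp ((a - 1) * t) = exp (a * t)"
      by (simp only: flip: exp_add) (simp add: algebra_simps)
    ultimately show ?thesis
      unfolding \<phi>''_def by (simp add: mult.assoc)
  qed
  have \<phi>'_neg: "\<phi>' t < 0" if "0 < t" "t < \<delta>" for t
  proof -
    have "\<phi>' t < \<phi>' 0"
    proof (rule DERIV_neg_imp_decreasing_open[OF \<open>0 < t\<close>])
      show "\<exists>y. DERIV \<phi>' z :> y \<and> y < 0" if "0 < z" "z < t" for z
        using d2[of z] \<phi>''_neg[of z] \<open>t < \<delta>\<close> that by auto
      show "continuous_on {0..t} \<phi>'"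
        by (intro continuous_at_imp_continuous_on ballI DERIV_isCont[OF d2])
    qed
    then show ?thesis
      by (simp add: \<phi>'_def)
  qed
  have "\<phi> \<delta> < \<phi> 0"
  proof (rule DERIV_neg_imp_decreasing_open[OF \<open>0 < \<delta>\<close>])
    show "\<exists>y. DERIV \<phi> z :> y \<and> y < 0" if "0 < z" "z < \<delta>" for z
      using d1[of z] \<phi>'_neg[of z] that by blast
    show "continuous_on {0..\<delta>} \<phi>"
      by (intro continuous_at_imp_continuous_on ballI DERIV_isCont[OF d1])
  qed
  then show ?thesis
    using \<open>0 < \<delta>\<close> unfolding \<phi>_def by auto
qed

lemma mult_exp_le_exp_minus_one_iff:
  fixes a :: real
  assumes "0 < a"
  shows "(\<forall>s>0. s * exp ((1 - a) * s) \<le> exp s - 1) \<longleftrightarrow> 1/2 \<le> a"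
proof -
  have "s * exp ((1 - a) * s) \<le> exp s - 1 \<longleftrightarrow> s \<le> exp (a * s) - exp ((a - 1) * s)" for s
    by (simp add: exp_minus_one_eq[of s a] mult.commute)
  then show ?thesis
    using le_exp_diff_of_half_le exp_diff_less_of_less_half[OF assms]
    by (meson less_eq_real_def not_le)
qed

lemma exp_minus_one_le_mult_exp:
  fixes y :: real
  shows "exp y - 1 \<le> y * exp y"
proof -
  have "exp y * (1 - y) \<le> exp y * exp (- y)"
    using exp_ge_add_one_self[of "- y"] by (intro mult_left_mono) auto
  then show ?thesis
    by (simp add: algebra_simps exp_minus)
qed

lemma exists_exp_minus_one_le_mult:
  fixes c s :: real
  assumes "1 < c" "0 < s"
  shows "\<exists>y. 0 < y \<and> y < s \<and> exp y - 1 \<le> c * y"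
proof (intro exI conjI)
  define y where "y = min (s/2) (ln c)"
  show "0 < y" "y < s"
    using assms by (auto simp: y_def)
  have "exp y \<le> exp (ln c)"
    by (simp add: y_def)
  then have "exp y \<le> c"
    using assms by simp
  then have "y * exp y \<le> c * y"
    using \<open>0 < y\<close> by (simp add: mult.commute)
  then show "exp y - 1 \<le> c * y"
    using exp_minus_one_le_mult_exp[of y] by linarith
qed

lemma calH_neg_everywhere_iff:
  "(\<forall>x y. 0 < x \<longrightarrow> 0 < y \<longrightarrow> calH a x y < 0) \<longleftrightarrow> (\<forall>s>0. s * exp ((1 - a) * s) \<le> exp s - 1)"
proof (intro iffI allI impI)
  fix x y :: real
  assume bound: "\<forall>s>0. s * exp ((1 - a) * s) \<le> exp s - 1" and "0 < x" "0 < y"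
  have "y * ((x + y) * exp ((1 - a) * (x + y))) \<le> y * (exp (x + y) - 1)"
    using bound \<open>0 < x\<close> \<open>0 < y\<close> by (simp add: mult_left_mono)
  also have "\<dots> < (exp y - 1) * (exp (x + y) - 1)"
  proof (intro mult_strict_right_mono)
    show "y < exp y - 1"
      using exp_lower_Taylor_quadratic[of y] \<open>0 < y\<close> zero_less_power[of y 2] by linarith
  qed (use \<open>0 < x\<close> \<open>0 < y\<close> in simp)
  finally show "calH a x y < 0"
    using calH_neg_iff[OF \<open>0 < x\<close> \<open>0 < y\<close>] by (simp add: mult_ac)
next
  fix s :: real
  assume neg: "\<forall>x y. 0 < x \<longrightarrow> 0 < y \<longrightarrow> calH a x y < 0" and "0 < s"
  show "s * exp ((1 - a) * s) \<le> exp s - 1"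
  proof (rule ccontr)
    assume exceeds: "\<not> ?thesis"
    \<comment> \<open>then \<open>calH a (s - y) y \<ge> 0\<close> for small \<open>y\<close>, since \<open>(exp y - 1) / y \<rightarrow> 1\<close>\<close>
    define c where "c = s * exp ((1 - a) * s) / (exp s - 1)"
    have "0 < exp s - 1"
      using \<open>0 < s\<close> by simp
    then have "1 < c"
      using exceeds by (simp add: c_def)
    then obtain y where "0 < y" "y < s" and y: "exp y - 1 \<le> c * y"
      using exists_exp_minus_one_le_mult \<open>0 < s\<close> by blast
    have "(exp s - 1) * (exp y - 1) \<le> (exp s - 1) * (c * y)"
      using y \<open>0 < exp s - 1\<close> by simp
    also have "\<dots> = y * s * exp ((1 - a) * s)"
      using \<open>0 < exp s - 1\<close> by (simp add: c_def)
    finally show False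
      using neg calH_neg_iff[of "s - y" y a] \<open>0 < y\<close> \<open>y < s\<close> by simp
  qed
qed

theorem lemma3p10:
  fixes a :: real
  assumes "0 < a" and "a \<le> 1"
  shows "(\<forall>x y. 0 < x \<longrightarrow> 0 < y \<longrightarrow> calH a x y < 0) \<longleftrightarrow> a \<ge> 1/2"
  using calH_neg_everywhere_iff mult_exp_le_exp_minus_one_iff[OF \<open>0 < a\<close>] by simp

end
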